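(* Let $G=(V,E,L)$ be a complete hypergraph with loops, with $n:=|V|$ nodes, such that $L=L^+=\{\{j,j\}\}$ for some $j\in V$ (a single plus loop and no minus loops). Then $$\mathrm{PP}(G)=\Big\{z\in\mathbb{R}^{V\cup E\cup L}:\ z_{jj}\ \ge \sum_{J\subseteq V:\, j\in J}\frac{\big(\ell_n(J,V\setminus J)\big)^2}{\ell_{n-1}(J\setminus\{j\},V\setminus J)},\quad \ell_n(J,V\setminus J)\ge 0\ \ \forall J\subseteq V\Big\}.$$
   Context: A hypergraph with loops is a triple $G=(V,E,L)$ where $V$ is a finite node set, $E$ is a set of subsets of $V$ each of cardinality at least two (edges), and $L$ is a set of loops, each written $\{i,i\}$ for some $i\in V$ (at most one per node), partitioned as $L=L^-\cup L^+$ into minus loops and plus loops. $G$ is complete if $E$ consists of all subsets of $V$ of cardinality at least two. For such $G$, $$\mathrm{PP}(G):=\mathrm{conv}\Big\{z\in\mathbb{R}^{V\cup E\cup L}: z_{ii}\ge z_i^2\ \forall\{i,i\}\in L^+,\ z_{ii}\le z_i^2\ \forall \{i,i\}\in L^-,\ z_e=\prod_{i\in e}z_i\ \forall e\in E,\ z_i\in[0,1]\ \forall i\in V\Big\},$$ where coordinates are indexed by nodes ($z_i$), edges ($z_e$) and loops ($z_{ii}$). For a subset $S\subseteq V$ write $z_S$ with the conventions $z_\emptyset:=1$, $z_{\{i\}}:=z_i$, and $z_S$ the edge coordinate when $|S|\ge2$ (loop coordinates $z_{ii}$ are distinct from these). For disjoint $J_1,J_2\subseteq V$ with $|J_1\cup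 J_2|=d$, define $\ell_d(J_1,J_2):=\sum_{t\subseteq J_2}(-1)^{|t|}z_{J_1\cup t}$. Any expression $u^2/v$ denotes the closure of the perspective: it equals $u^2/v$ if $v>0$, $0$ if $u=v=0$, and $+\infty$ if $u\ne0$, $v=0$. *)

theory Defs
  imports "HOL-Analysis.Analysis" "HOL-Library.Extended_Real"
begin

text \<open>Node set V is the finite type 'v (V = UNIV). A point of R^(V \<union> E \<union> L) with
  L = {{j,j}} is a pair (w, y): w $ S is the node coordinate z_i for S = {i},
  the edge coordinate z_S for card S \<ge> 2; the coordinate w $ {} is unused and fixed to 0;
  y is the loop coordinate z_jj.\<close>

definition zS :: "real ^ ('v::finite set) \<Rightarrow> 'v set \<Rightarrow> real" where
  "zS w S = (if S = {} then 1 else w $ S)"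

definition ell :: "real ^ ('v::finite set) \<Rightarrow> 'v set \<Rightarrow> 'v set \<Rightarrow> real" where
  "ell w J1 J2 = (\<Sum>t\<in>Pow J2. (-1) ^ card t * zS w (J1 \<union> t))"

text \<open>Closure of the perspective u^2/v (value +\<infinity> also for v < 0, the closure convention).\<close>
definition persp :: "real \<Rightarrow> real \<Rightarrow> ereal" where
  "persp u v = (if v > 0 then ereal (u^2 / v) else if u = 0 \<and> v = 0 then 0 else \<infinity>)"

definition PP_one_plus_loop :: "'v::finite \<Rightarrow> ((real ^ 'v set) \<times> real) set" where
  "PP_one_plus_loop j = (convex hull
     {((\<chi> S. if S = {} then 0 else (\<Prod>i\<in>S. x i)), y) | (x :: 'v \<Rightarrow> real) (y :: real).
        (\<forall>i. 0 \<le> x i \<and> x i \<le> 1) \<and> y \<ge> (x j)^2})"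

end

theory Submission
  imports Defs
begin

text \<open>The generator (prod_vec x, y) is the moment vector of the product distribution on
  subsets of V with marginals x: ell (prod_vec x) J (V - J) = (\<Prod>i\<in>J. x i) * (\<Prod>i\<notin>J. 1 - x i)
  is the probability of J. As ell is affine, every point of the hull has nonnegative ell, and the
  denominators ell w (J - {j}) (V - J), j \<in> J, form a probability distribution. For one generator
  the perspective terms add up to (x j)^2, so Cauchy-Schwarz bounds the perspective sum of a
  convex combination by the average of (x j)^2, hence by y.

  Conversely, Moebius inversion writes every w with nonnegative ell as the convex combination of
  the vertices prod_vec (indicator K) with weights ell w K (V - K). Merging the vertices J - {j}
  and J into one point of the segment between them, with j-th coordinate the ratio of the two
  weights, yields a combination whose loop value is exactly the perspective sum.\<close>

lemma sum_Pow_insert: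
  assumes "finite A" and "a \<notin> A"
  shows "(\<Sum>X\<in>Pow (insert a A). f X) = (\<Sum>X\<in>Pow A. f X) + (\<Sum>X\<in>Pow A. f (insert a X))"
proof -
  have "inj_on (insert a) (Pow A)"
    using assms(2) by (intro inj_onI) (metis PowD insert_ident subsetD)
  then show ?thesis
    unfolding Pow_insert using assms
    by (subst sum.union_disjoint) (auto simp: sum.reindex)
qed

lemma sum_split_member:
  fixes f :: "'v::finite set \<Rightarrow> 'a::comm_monoid_add"
  shows "(\<Sum>K\<in>UNIV. f K) = (\<Sum>J\<in>{J. j \<in> J}. f (J - {j}) + f J)"
proof -
  have "(\<Sum>K\<in>UNIV. f K) = (\<Sum>K\<in>{K. j \<notin> K}. f K) + (\<Sum>J\<in>{J. j \<in> J}. f J)"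
    by (subst sum.union_disjoint[symmetric]) (auto intro: sum.cong)
  also have "(\<Sum>K\<in>{K. j \<notin> K}. f K) = (\<Sum>J\<in>{J. j \<in> J}. f (J - {j}))"
    by (rule sum.reindex_bij_witness[where i = "\<lambda>J. J - {j}" and j = "insert j"]) auto
  finally show ?thesis
    by (simp add: sum.distrib)
qed

lemma persp_sum_le:
  assumes "finite S" and "\<forall>s\<in>S. 0 \<le> a s"
  shows "persp (\<Sum>s\<in>S. a s * x s) (sum a S) \<le> ereal (\<Sum>s\<in>S. a s * (x s)\<^sup>2)"
proof (cases "sum a S > 0")
  case True
  have "(\<Sum>s\<in>S. (sqrt (a s) * x s) * sqrt (a s))\<^sup>2 \<le>
      (\<Sum>s\<in>S. (sqrt (a s) * x s)\<^sup>2) * (\<Sum>s\<in>S. (sqrt (a s))\<^sup>2)"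
    by (rule Cauchy_Schwarz_ineq_sum)
  then have "(\<Sum>s\<in>S. a s * x s)\<^sup>2 \<le> (\<Sum>s\<in>S. a s * (x s)\<^sup>2) * sum a S"
    using assms(2) by (simp add: power_mult_distrib mult_ac)
  then show ?thesis
    using True by (simp add: persp_def pos_divide_le_eq)
next
  case False
  then have "\<forall>s\<in>S. a s = 0"
    using assms sum_nonneg_eq_0_iff[of S a] sum_nonneg[of S a] by auto
  then show ?thesis
    by (simp add: persp_def)
qed

lemma persp_eq_ratio_square:
  assumes "0 \<le> u" and "u \<le> v"
  shows "persp u v = ereal (v * (u / v)\<^sup>2)"
  using assms by (auto simp: persp_def power2_eq_square)

lemma ell_insert:
  fixes w :: "real ^ ('v::finite set)"
  assumes "i \<notin> J1" and "i \<notin> J2"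
  shows "ell w J1 (insert i J2) = ell w J1 J2 - ell w (insert i J1) J2"
proof -
  have "(\<Sum>t\<in>Pow J2. (-1) ^ card (insert i t) * zS w (J1 \<union> insert i t)) = - ell w (insert i J1) J2"
    unfolding ell_def sum_negf[symmetric] using assms(2)
    by (intro sum.cong refl) (auto simp: card_insert_if)
  then show ?thesis
    unfolding ell_def[of w J1] using assms(2) by (simp add: sum_Pow_insert)
qed

lemma ell_eq_sum_Pow:
  fixes w :: "real ^ ('v::finite set)"
  assumes "R \<inter> (J1 \<union> J2) = {}"
  shows "ell w J1 J2 = (\<Sum>B\<in>Pow R. ell w (J1 \<union> B) (J2 \<union> (R - B)))"
  using finite[of R] assms
proof (induction R rule: finite_induct)
  case empty
  then show ?case by simp
next
  case (insert i R)
  have "ell w (J1 \<union> B) (J2 \<union> (insert i R - B)) +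
      ell w (J1 \<union> insert i B) (J2 \<union> (insert i R - insert i B)) =
      ell w (J1 \<union> B) (J2 \<union> (R - B))" if "B \<in> Pow R" for B
  proof -
    have "J2 \<union> (insert i R - B) = insert i (J2 \<union> (R - B))" "J1 \<union> insert i B = insert i (J1 \<union> B)"
      "J2 \<union> (insert i R - insert i B) = J2 \<union> (R - B)"
      using that insert.hyps(2) by auto
    moreover have "i \<notin> J1 \<union> B" "i \<notin> J2 \<union> (R - B)"
      using that insert.hyps(2) insert.prems by auto
    ultimately show ?thesis by (simp add: ell_insert)
  qed
  then show ?case
    using insert by (simp add: sum_Pow_insert flip: sum.distrib)
qed

lemma zS_eq_sum_ell:
  fixes w :: "real ^ ('v::finite set)"
  shows "zS w S = (\<Sum>K\<in>{K. S \<subseteq> K}. ell w K (UNIV - K))"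
proof -
  have complement: "UNIV - S - B = UNIV - (S \<union> B)" for B
    by auto
  have "zS w S = ell w S {}"
    by (simp add: ell_def)
  also have "\<dots> = (\<Sum>B\<in>Pow (UNIV - S). ell w (S \<union> B) (UNIV - (S \<union> B)))"
    by (subst ell_eq_sum_Pow[of "UNIV - S"]) (auto simp: complement)
  also have "\<dots> = (\<Sum>K\<in>{K. S \<subseteq> K}. ell w K (UNIV - K))"
    by (rule sum.reindex_bij_witness[where i = "\<lambda>K. K - S" and j = "\<lambda>B. S \<union> B"]) auto
  finally show ?thesis .
qed

lemma ell_remove_member:
  fixes w :: "real ^ ('v::finite set)"
  assumes "j \<in> J"
  shows "ell w (J - {j}) (UNIV - J) = ell w (J - {j}) (UNIV - (J - {j})) + ell w J (UNIV - J)"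
proof -
  have "ell w (J - {j}) (insert j (UNIV - J)) =
      ell w (J - {j}) (UNIV - J) - ell w (insert j (J - {j})) (UNIV - J)"
    using assms by (intro ell_insert) auto
  moreover have "insert j (UNIV - J) = UNIV - (J - {j})"
    using assms by auto
  ultimately show ?thesis
    using assms by (simp add: insert_absorb)
qed

lemma sum_ell_remove_member:
  fixes w :: "real ^ ('v::finite set)"
  shows "(\<Sum>J\<in>{J. j \<in> J}. ell w (J - {j}) (UNIV - J)) = 1"
proof -
  have "(\<Sum>J\<in>{J. j \<in> J}. ell w (J - {j}) (UNIV - J)) = (\<Sum>K\<in>UNIV. ell w K (UNIV - K))"
    by (simp add: sum_split_member[of _ j] ell_remove_member)
  also have "\<dots> = zS w {}"
    by (simp add: zS_eq_sum_ell)
  finally show ?thesis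
    by (simp add: zS_def)
qed

lemma ell_convex_combination:
  fixes W :: "'a \<Rightarrow> real ^ ('v::finite set)"
  assumes "finite I" and "sum \<mu> I = 1"
  shows "ell (\<Sum>s\<in>I. \<mu> s *\<^sub>R W s) J1 J2 = (\<Sum>s\<in>I. \<mu> s * ell (W s) J1 J2)"
proof -
  have "zS (\<Sum>s\<in>I. \<mu> s *\<^sub>R W s) T = (\<Sum>s\<in>I. \<mu> s * zS (W s) T)" for T
    using assms by (simp add: zS_def flip: sum_distrib_right)
  then show ?thesis
    unfolding ell_def by (simp add: sum_distrib_left mult_ac sum.swap[of _ I])
qed

definition prod_vec :: "('v::finite \<Rightarrow> real) \<Rightarrow> real ^ 'v set" where
  "prod_vec x = (\<chi> S. if S = {} then 0 else \<Prod>i\<in>S. x i)"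

lemma PP_one_plus_loop_prod_vec:
  "PP_one_plus_loop j =
     convex hull {(prod_vec x, y) | x y. (\<forall>i. 0 \<le> x i \<and> x i \<le> 1) \<and> (x j)\<^sup>2 \<le> y}"
  unfolding PP_one_plus_loop_def prod_vec_def ..

lemma prod_vec_empty [simp]: "prod_vec x $ {} = 0"
  by (simp add: prod_vec_def)

lemma zS_prod_vec: "zS (prod_vec x) S = (\<Prod>i\<in>S. x i)"
  by (simp add: zS_def prod_vec_def)

lemma prod_vec_fun_upd:
  fixes x :: "'v::finite \<Rightarrow> real"
  shows "prod_vec (x(j := t)) = (1 - t) *\<^sub>R prod_vec (x(j := 0)) + t *\<^sub>R prod_vec (x(j := 1))"
  unfolding vec_eq_iff
proof
  fix S :: "'v set"
  show "prod_vec (x(j := t)) $ S = ((1 - t) *\<^sub>R prod_vec (x(j := 0)) + t *\<^sub>R prod_vec (x(j := 1))) $ S"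
  proof (cases "j \<in> S")
    case True
    then have "(\<Prod>i\<in>S. (x(j := a)) i) = a * (\<Prod>i\<in>S - {j}. x i)" for a
      by (simp add: prod.remove)
    then show ?thesis by (simp add: prod_vec_def algebra_simps)
  next
    case False
    then have "(\<Prod>i\<in>S. (x(j := a)) i) = (\<Prod>i\<in>S. x i)" for a
      by (intro prod.cong) auto
    then show ?thesis by (simp add: prod_vec_def algebra_simps)
  qed
qed

lemma prod_vec_indicator:
  "prod_vec (indicator K) $ S = of_bool (S \<noteq> {} \<and> S \<subseteq> K)"
  by (auto simp: prod_vec_def indicator_def prod_zero intro!: prod.neutral)

lemma ell_prod_vec:
  assumes "J1 \<inter> J2 = {}"
  shows "ell (prod_vec x) J1 J2 = (\<Prod>i\<in>J1. x i) * (\<Prod>i\<in>J2. 1 - x i)"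
proof -
  have "(\<Prod>i\<in>J1 \<union> t. x i) = (\<Prod>i\<in>J1. x i) * (\<Prod>i\<in>t. x i)" if "t \<subseteq> J2" for t
    using that assms by (intro prod.union_disjoint) auto
  then have "ell (prod_vec x) J1 J2 = (\<Prod>i\<in>J1. x i) * (\<Sum>t\<in>Pow J2. (-1) ^ card t * (\<Prod>i\<in>t. x i))"
    by (simp add: ell_def zS_prod_vec sum_distrib_left mult_ac)
  also have "\<dots> = (\<Prod>i\<in>J1. x i) * (\<Prod>i\<in>J2. 1 - x i)"
    by (simp add: prod_diff_conv_sum)
  finally show ?thesis .
qed

lemma ell_prod_vec_nonneg:
  assumes "\<forall>i. 0 \<le> x i \<and> x i \<le> 1" and "J1 \<inter> J2 = {}"
  shows "0 \<le> ell (prod_vec x) J1 J2"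
  using assms by (simp add: ell_prod_vec prod_nonneg)

lemma ell_prod_vec_member:
  assumes "j \<in> J"
  shows "ell (prod_vec x) J (UNIV - J) = x j * ell (prod_vec x) (J - {j}) (UNIV - J)"
  using assms by (simp add: ell_prod_vec Diff_Int_distrib2 prod.remove)

lemma vec_eq_sum_ell_indicator:
  fixes w :: "real ^ ('v::finite set)"
  assumes "w $ {} = 0"
  shows "w = (\<Sum>K\<in>UNIV. ell w K (UNIV - K) *\<^sub>R prod_vec (indicator K))"
  unfolding vec_eq_iff
proof
  fix S :: "'v set"
  show "w $ S = (\<Sum>K\<in>UNIV. ell w K (UNIV - K) *\<^sub>R prod_vec (indicator K)) $ S"
  proof (cases "S = {}")
    case True
    then show ?thesis
      using assms by simp
  next
    case False
    then have "w $ S = (\<Sum>K\<in>{K. S \<subseteq> K}. ell w K (UNIV - K))"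
      by (simp add: zS_def flip: zS_eq_sum_ell)
    then show ?thesis
      using False by (simp add: prod_vec_indicator)
  qed
qed

text \<open>If the denominator vanishes, so does the numerator (both weights are nonnegative), and
  the junk value x / 0 = 0 still gives a valid point.\<close>

definition edge_point :: "real ^ ('v::finite set) \<Rightarrow> 'v \<Rightarrow> 'v set \<Rightarrow> 'v \<Rightarrow> real" where
  "edge_point w j J =
     (indicator (J - {j}))(j := ell w J (UNIV - J) / ell w (J - {j}) (UNIV - J))"

lemma vec_eq_sum_edge_points:
  fixes w :: "real ^ ('v::finite set)"
  assumes "w $ {} = 0" and "\<forall>K. 0 \<le> ell w K (UNIV - K)"
  shows "w = (\<Sum>J\<in>{J. j \<in> J}. ell w (J - {j}) (UNIV - J) *\<^sub>R prod_vec (edge_point w j J))"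
proof -
  have "ell w (J - {j}) (UNIV - J) *\<^sub>R prod_vec (edge_point w j J) =
      ell w (J - {j}) (UNIV - (J - {j})) *\<^sub>R prod_vec (indicator (J - {j})) +
      ell w J (UNIV - J) *\<^sub>R prod_vec (indicator J)" if "j \<in> J" for J
  proof -
    define a where "a = ell w (J - {j}) (UNIV - (J - {j}))"
    define b where "b = ell w J (UNIV - J)"
    have "a \<ge> 0" "b \<ge> 0"
      using assms(2) by (simp_all add: a_def b_def)
    then have "(a + b) * (1 - b / (a + b)) = a" "(a + b) * (b / (a + b)) = b"
      by (auto simp: divide_simps add_nonneg_eq_0_iff)
    moreover have "(indicator (J - {j}))(j := 0) = (indicator (J - {j}) :: 'v \<Rightarrow> real)"
      "(indicator (J - {j}))(j := 1) = (indicator J :: 'v \<Rightarrow> real)"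
      using that by (auto simp: indicator_def)
    ultimately show ?thesis
      using that
      by (simp add: edge_point_def prod_vec_fun_upd[of _ j] ell_remove_member a_def[symmetric]
          b_def[symmetric] scaleR_add_right)
  qed
  then have "(\<Sum>J\<in>{J. j \<in> J}. ell w (J - {j}) (UNIV - J) *\<^sub>R prod_vec (edge_point w j J)) =
      (\<Sum>K\<in>UNIV. ell w K (UNIV - K) *\<^sub>R prod_vec (indicator K))"
    unfolding sum_split_member[of _ j] by (intro sum.cong) auto
  then show ?thesis
    using vec_eq_sum_ell_indicator[OF assms(1)] by simp
qed

lemma ell_le_ell_remove_member:
  fixes w :: "real ^ ('v::finite set)"
  assumes "\<forall>K. 0 \<le> ell w K (UNIV - K)" and "j \<in> J"
  shows "ell w J (UNIV - J) \<le> ell w (J - {j}) (UNIV - J)"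
  using assms by (simp add: ell_remove_member)

lemma edge_point_bounds:
  assumes "\<forall>K. 0 \<le> ell w K (UNIV - K)" and "j \<in> J"
  shows "0 \<le> edge_point w j J i \<and> edge_point w j J i \<le> 1"
proof -
  have "0 \<le> ell w J (UNIV - J)" "ell w J (UNIV - J) \<le> ell w (J - {j}) (UNIV - J)"
    using assms ell_le_ell_remove_member[OF assms] by auto
  then show ?thesis
    by (auto simp: edge_point_def indicator_def divide_le_eq_1)
qed

lemma sum_persp_ell_edge_points:
  fixes w :: "real ^ ('v::finite set)"
  assumes "\<forall>K. 0 \<le> ell w K (UNIV - K)"
  shows "(\<Sum>J\<in>{J. j \<in> J}. persp (ell w J (UNIV - J)) (ell w (J - {j}) (UNIV - J))) =
    ereal (\<Sum>J\<in>{J. j \<in> J}. ell w (J - {j}) (UNIV - J) * (edge_point w j J j)\<^sup>2)"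
  using assms ell_le_ell_remove_member[OF assms]
  by (simp add: edge_point_def persp_eq_ratio_square)

lemma sum_persp_ell_le:
  fixes x :: "'a \<Rightarrow> 'v::finite \<Rightarrow> real"
  assumes "finite S" and "\<forall>s\<in>S. 0 \<le> \<mu> s" and "sum \<mu> S = 1"
    and "\<forall>s\<in>S. \<forall>i. 0 \<le> x s i \<and> x s i \<le> 1"
  defines "w \<equiv> \<Sum>s\<in>S. \<mu> s *\<^sub>R prod_vec (x s)"
  shows "(\<Sum>J\<in>{J. j \<in> J}. persp (ell w J (UNIV - J)) (ell w (J - {j}) (UNIV - J)))
           \<le> ereal (\<Sum>s\<in>S. \<mu> s * (x s j)\<^sup>2)"
proof -
  define c where "c s J = \<mu> s * ell (prod_vec (x s)) (J - {j}) (UNIV - J)" for s J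
  have ell_w: "ell w J1 J2 = (\<Sum>s\<in>S. \<mu> s * ell (prod_vec (x s)) J1 J2)" for J1 J2
    unfolding w_def using assms(1,3) by (rule ell_convex_combination)
  have "persp (ell w J (UNIV - J)) (ell w (J - {j}) (UNIV - J)) \<le> ereal (\<Sum>s\<in>S. c s J * (x s j)\<^sup>2)"
    if "j \<in> J" for J
  proof -
    have "0 \<le> c s J" if "s \<in> S" for s
      using assms(2,4) that by (auto simp: c_def intro!: mult_nonneg_nonneg ell_prod_vec_nonneg)
    then have "persp (\<Sum>s\<in>S. c s J * x s j) (\<Sum>s\<in>S. c s J) \<le> ereal (\<Sum>s\<in>S. c s J * (x s j)\<^sup>2)"
      using assms(1) by (intro persp_sum_le) auto
    then show ?thesis
      using that by (simp add: ell_w c_def ell_prod_vec_member mult_ac)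
  qed
  then have "(\<Sum>J\<in>{J. j \<in> J}. persp (ell w J (UNIV - J)) (ell w (J - {j}) (UNIV - J)))
      \<le> (\<Sum>J\<in>{J. j \<in> J}. ereal (\<Sum>s\<in>S. c s J * (x s j)\<^sup>2))"
    by (intro sum_mono) auto
  also have "\<dots> = ereal (\<Sum>s\<in>S. \<Sum>J\<in>{J. j \<in> J}. c s J * (x s j)\<^sup>2)"
    by (simp add: sum.swap[of _ "{J. j \<in> J}"])
  also have "(\<Sum>s\<in>S. \<Sum>J\<in>{J. j \<in> J}. c s J * (x s j)\<^sup>2) = (\<Sum>s\<in>S. \<mu> s * (x s j)\<^sup>2)"
    by (simp add: c_def mult_ac flip: sum_distrib_left sum_distrib_right)
      (simp add: sum_ell_remove_member)
  finally show ?thesis .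
qed

lemma PP_one_plus_loop_memD:
  fixes j :: "'v::finite"
  assumes "(w, y) \<in> PP_one_plus_loop j"
  shows "w $ {} = 0"
    and "ereal y \<ge> (\<Sum>J\<in>{J. j \<in> J}. persp (ell w J (UNIV - J)) (ell w (J - {j}) (UNIV - J)))"
    and "\<forall>J. ell w J (UNIV - J) \<ge> 0"
proof -
  obtain S \<mu> where S: "finite S"
      "S \<subseteq> {(prod_vec x, y) | x y. (\<forall>i. 0 \<le> x i \<and> x i \<le> 1) \<and> (x j)\<^sup>2 \<le> y}"
    and \<mu>: "\<forall>s\<in>S. 0 \<le> \<mu> s" "sum \<mu> S = 1"
    and wy: "(\<Sum>s\<in>S. \<mu> s *\<^sub>R s) = (w, y)"
    using assms unfolding PP_one_plus_loop_prod_vec convex_hull_explicit by blast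
  have "\<forall>s\<in>S. \<exists>x. fst s = prod_vec x \<and> (\<forall>i. 0 \<le> x i \<and> x i \<le> 1) \<and> (x j)\<^sup>2 \<le> snd s"
    using S(2) by force
  then obtain x where x: "\<forall>s\<in>S. fst s = prod_vec (x s) \<and>
      (\<forall>i. 0 \<le> x s i \<and> x s i \<le> 1) \<and> (x s j)\<^sup>2 \<le> snd s"
    by metis
  have w: "w = (\<Sum>s\<in>S. \<mu> s *\<^sub>R prod_vec (x s))"
    using arg_cong[OF wy, of fst] x by (simp add: fst_sum)
  have y: "y = (\<Sum>s\<in>S. \<mu> s * snd s)"
    using arg_cong[OF wy, of snd] by (simp add: snd_sum)
  show "w $ {} = 0"
    by (simp add: w)
  show "\<forall>J. ell w J (UNIV - J) \<ge> 0"
    using S(1) \<mu> x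
    by (auto simp: w ell_convex_combination intro!: sum_nonneg mult_nonneg_nonneg ell_prod_vec_nonneg)
  have "(\<Sum>J\<in>{J. j \<in> J}. persp (ell w J (UNIV - J)) (ell w (J - {j}) (UNIV - J)))
      \<le> ereal (\<Sum>s\<in>S. \<mu> s * (x s j)\<^sup>2)"
    unfolding w using S(1) \<mu> x by (intro sum_persp_ell_le) auto
  also have "\<dots> \<le> ereal y"
    using \<mu> x by (auto simp: y intro!: sum_mono mult_left_mono)
  finally show "ereal y \<ge> (\<Sum>J\<in>{J. j \<in> J}. persp (ell w J (UNIV - J)) (ell w (J - {j}) (UNIV - J)))" .
qed

lemma PP_one_plus_loop_memI:
  fixes j :: "'v::finite"
  assumes "w $ {} = 0"
    and "ereal y \<ge> (\<Sum>J\<in>{J. j \<in> J}. persp (ell w J (UNIV - J)) (ell w (J - {j}) (UNIV - J)))"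
    and "\<forall>J. ell w J (UNIV - J) \<ge> 0"
  shows "(w, y) \<in> PP_one_plus_loop j"
proof -
  define v where "v J = ell w (J - {j}) (UNIV - J)" for J
  define x where "x = edge_point w j"
  have "(\<Sum>J\<in>{J. j \<in> J}. v J * (x J j)\<^sup>2) \<le> y"
    using assms(2) unfolding sum_persp_ell_edge_points[OF assms(3)] v_def x_def by simp
  then obtain d where d: "d \<ge> 0" "y = (\<Sum>J\<in>{J. j \<in> J}. v J * (x J j)\<^sup>2) + d"
    by (metis add.commute diff_add_cancel diff_ge_0_iff_ge)
  have "(\<Sum>J\<in>{J. j \<in> J}. v J * ((x J j)\<^sup>2 + d)) = y"
    using sum_ell_remove_member[of w j]
    by (simp add: d(2) v_def distrib_left sum.distrib flip: sum_distrib_right)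
  moreover have "(\<Sum>J\<in>{J. j \<in> J}. v J *\<^sub>R prod_vec (x J)) = w"
    using vec_eq_sum_edge_points[OF assms(1,3), of j] by (simp add: x_def v_def)
  ultimately have "(w, y) = (\<Sum>J\<in>{J. j \<in> J}. v J *\<^sub>R (prod_vec (x J), (x J j)\<^sup>2 + d))"
    by (simp add: prod_eq_iff fst_sum snd_sum)
  also have "\<dots> \<in> PP_one_plus_loop j"
    unfolding PP_one_plus_loop_prod_vec
  proof (rule convex_sum)
    show "(\<Sum>J\<in>{J. j \<in> J}. v J) = 1"
      unfolding v_def by (rule sum_ell_remove_member)
    show "0 \<le> v J" if "J \<in> {J. j \<in> J}" for J
      using assms(3) that by (simp add: v_def ell_remove_member)
    show "(prod_vec (x J), (x J j)\<^sup>2 + d) \<in> convex hull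
        {(prod_vec x, y) | x y. (\<forall>i. 0 \<le> x i \<and> x i \<le> 1) \<and> (x j)\<^sup>2 \<le> y}"
      if "J \<in> {J. j \<in> J}" for J
      using edge_point_bounds[OF assms(3), of j J] that d(1) unfolding x_def[symmetric]
      by (intro hull_inc CollectI exI[where x = "x J"] exI[where x = "(x J j)\<^sup>2 + d"]) auto
  qed (simp_all add: convex_convex_hull)
  finally show ?thesis .
qed

theorem theorem1:
  fixes j :: "'v::finite"
  shows "PP_one_plus_loop j =
    {(w, y). w $ {} = 0 \<and>
       ereal y \<ge> (\<Sum>J\<in>{J. j \<in> J}. persp (ell w J (UNIV - J)) (ell w (J - {j}) (UNIV - J))) \<and>
       (\<forall>J. ell w J (UNIV - J) \<ge> 0)}"
  by (auto dest: PP_one_plus_loop_memD intro: PP_one_plus_loop_memI)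

end
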